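(* Let $r,t,t_1,\dots,t_r$ be positive integers with $t_1+t_2+\dots+t_r=t+r-1$, and let $H$ be an $r$-partite $r$-graph with $|E(H)|>\frac{t-1}{r}\,|\partial H|$. Then there is an $r$-graph $H'\subseteq H$ with at least one edge such that $\delta_{(1,2,\dots,r)}(H')\ge (t_1,t_2,\dots,t_r)$.
   Context: An $r$-graph is an $r$-uniform hypergraph. An $r$-graph is $r$-partite if its vertex set can be partitioned into $r$ classes such that every edge contains exactly one vertex from each class. The shadow $\partial H$ of an $r$-graph $H$ is the set of all $(r-1)$-element sets contained in some edge of $H$. For an $r$-partite $r$-graph $H$ (with partition inherited from the ambient $r$-partition), we write $\delta_{(1,2,\dots,r)}(H)\ge (t_1,\dots,t_r)$ if the partition classes can be labeled $V_1,\dots,V_r$ so that for each $i\in[r]$, every $S\in\partial H$ with $S\cap V_i=\emptyset$ is contained in at least $t_i$ edges of $H$. *)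

theory Defs
  imports Complex_Main
begin

definition r_partition :: "nat \<Rightarrow> (nat \<Rightarrow> 'a set) \<Rightarrow> 'a set set \<Rightarrow> bool" where
  "r_partition r P H \<longleftrightarrow>
     (\<forall>i<r. \<forall>j<r. i \<noteq> j \<longrightarrow> P i \<inter> P j = {}) \<and>
     (\<forall>e\<in>H. e \<subseteq> (\<Union>i<r. P i) \<and> (\<forall>i<r. card (e \<inter> P i) = 1))"

definition shadow :: "nat \<Rightarrow> 'a set set \<Rightarrow> 'a set set" where
  "shadow r H = {S. \<exists>e\<in>H. S \<subseteq> e \<and> finite S \<and> card S = r - 1}"

definition codeg :: "'a set set \<Rightarrow> 'a set \<Rightarrow> nat" where
  "codeg H S = card {e\<in>H. S \<subseteq> e}"

text \<open>delta_(1,...,r)(H) >= (t 0, ..., t (r-1)) with respect to the ambient partition P: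
  the classes can be labeled (via a bijection sigma of the index set) so that every
  shadow set missing the i-th labeled class lies in at least t i edges.\<close>
definition min_partite_codeg_ge ::
    "nat \<Rightarrow> (nat \<Rightarrow> 'a set) \<Rightarrow> 'a set set \<Rightarrow> (nat \<Rightarrow> nat) \<Rightarrow> bool" where
  "min_partite_codeg_ge r P H t \<longleftrightarrow>
     (\<exists>\<sigma>. bij_betw \<sigma> {..<r} {..<r} \<and>
        (\<forall>i<r. \<forall>S\<in>shadow r H. S \<inter> P (\<sigma> i) = {} \<longrightarrow> codeg H S \<ge> t i))"

end

theory Submission
  imports Defs "HOL-Number_Theory.Cong"
begin

text \<open>Weight a shadow set S by the sum of t i - 1 over the labels i of the classes that S misses.
  If H has more edges than the total weight of its shadow, deleting all edges through a shadow set
  of codegree at most its weight keeps this inequality, so the process stops at a nonempty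
  subgraph in which every shadow set has codegree above its weight, i.e. at least t i whenever it
  misses the class labelled i. Since a shadow set of an r-partite r-graph misses at most one class,
  its weights under the r cyclic labellings of the classes add up to at most t - 1 in total;
  the hypothesis |H| > (t - 1)/r |\<partial>H| therefore holds for one of these labellings.\<close>

lemma bij_betw_add_mod: "bij_betw (\<lambda>x. (x + k) mod r) {..<r} {..<(r::nat)}"
proof -
  have "inj_on (\<lambda>x. (x + k) mod r) {..<r}"
    by (rule inj_onI) (metis cong_add_rcancel_nat cong_def lessThan_iff mod_less)
  then show ?thesis
    by (simp add: bij_betw_def endo_inj_surj image_subset_iff)
qed

lemma r_partition_edge:
  assumes "r_partition r P H" "e \<in> H"
  shows "finite e" "card e = r"
proof -
  have disj: "\<forall>i<r. \<forall>j<r. i \<noteq> j \<longrightarrow> P i \<inter> P j = {}"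
    and cover: "e = (\<Union>i<r. e \<inter> P i)" and one: "\<forall>i<r. card (e \<inter> P i) = 1"
    using assms unfolding r_partition_def by auto
  have fin: "\<forall>i\<in>{..<r}. finite (e \<inter> P i)"
    using one by (metis card.infinite lessThan_iff zero_neq_one)
  show "finite e"
    using cover fin by (metis finite_UN_I finite_lessThan)
  have "card (\<Union>i<r. e \<inter> P i) = (\<Sum>i<r. card (e \<inter> P i))"
    using fin disj by (intro card_UN_disjoint) auto
  with cover one show "card e = r" by simp
qed

lemma r_partition_shadow_misses_at_most_one_class:
  assumes "r_partition r P H" "S \<in> shadow r H"
  shows "card {j. j < r \<and> S \<inter> P j = {}} \<le> 1"
proof -
  obtain e where e: "e \<in> H" "S \<subseteq> e" "card S = r - 1"
    using assms(2) unfolding shadow_def by auto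
  have disj: "\<forall>i<r. \<forall>j<r. i \<noteq> j \<longrightarrow> P i \<inter> P j = {}"
    and one: "\<forall>i<r. card (e \<inter> P i) = 1"
    using assms(1) e(1) unfolding r_partition_def by auto
  have fin: "finite e" and card_e: "card e = r"
    using r_partition_edge[OF assms(1) e(1)] by auto
  have "a = b" if a: "a < r" "S \<inter> P a = {}" and b: "b < r" "S \<inter> P b = {}" for a b
  proof (rule ccontr)
    assume "a \<noteq> b"
    obtain x y where x: "e \<inter> P a = {x}" and y: "e \<inter> P b = {y}"
      using one a b by (metis card_1_singletonE)
    have "x \<noteq> y" using disj a b \<open>a \<noteq> b\<close> x y by blast
    have "S \<subseteq> e - {x, y}" using e(2) a b x y by blast
    then have "card S \<le> card (e - {x, y})" using fin by (simp add: card_mono)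
    also have "\<dots> = r - 2"
    proof -
      have "{x, y} \<subseteq> e" using x y by blast
      then show ?thesis
        using \<open>x \<noteq> y\<close> fin card_e by (simp add: card_Diff_subset finite_subset)
    qed
    finally show False using e(3) a b \<open>a \<noteq> b\<close> by linarith
  qed
  then show ?thesis by (auto simp: card_le_Suc0_iff_eq)
qed

lemma finite_shadow: "finite H \<Longrightarrow> \<forall>e\<in>H. finite e \<Longrightarrow> finite (shadow r H)"
  by (rule finite_subset[of _ "\<Union>e\<in>H. Pow e"]) (auto simp: shadow_def)

lemma shadow_mono: "H' \<subseteq> H \<Longrightarrow> shadow r H' \<subseteq> shadow r H"
  unfolding shadow_def by auto

lemma card_eq_card_edges_avoiding_plus_codeg:
  "finite H \<Longrightarrow> card H = card {e\<in>H. \<not> S \<subseteq> e} + codeg H S"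
  unfolding codeg_def by (subst card_Un_disjoint[symmetric]) (auto intro: arg_cong[where f = card])

lemma ex_subgraph_codeg_gt:
  fixes d :: "'a set \<Rightarrow> nat"
  assumes "\<forall>e\<in>H. finite e" and "(\<Sum>S\<in>shadow r H. d S) < card H"
  shows "\<exists>H'\<subseteq>H. H' \<noteq> {} \<and> (\<forall>S\<in>shadow r H'. d S < codeg H' S)"
proof -
  have "finite H" using assms(2) card.infinite by fastforce
  then show ?thesis
    using assms
  proof (induction H rule: finite_psubset_induct)
    case (psubset H)
    show ?case
    proof (cases "\<forall>S\<in>shadow r H. d S < codeg H S")
      case True
      then show ?thesis using psubset.prems(2) by auto
    next
      case False
      then obtain S where S: "S \<in> shadow r H" and low: "codeg H S \<le> d S"
        by (auto simp: not_less)
      define H1 where "H1 = {e\<in>H. \<not> S \<subseteq> e}"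
      have "H1 \<subset> H" using S unfolding H1_def shadow_def by auto
      have "S \<notin> shadow r H1" unfolding shadow_def H1_def by auto
      then have "shadow r H1 \<subseteq> shadow r H - {S}"
        using shadow_mono[OF psubset_imp_subset[OF \<open>H1 \<subset> H\<close>]] by blast
      moreover have "finite (shadow r H)"
        using finite_shadow[OF psubset.hyps psubset.prems(1)] .
      ultimately have "(\<Sum>S\<in>shadow r H1. d S) + d S \<le> (\<Sum>S\<in>shadow r H - {S}. d S) + d S"
        by (simp add: sum_mono2)
      also have "\<dots> = (\<Sum>S\<in>shadow r H. d S)"
        using sum.remove[OF \<open>finite (shadow r H)\<close> S, of d] by simp
      finally have "(\<Sum>S\<in>shadow r H1. d S) + d S \<le> (\<Sum>S\<in>shadow r H. d S)" .
      moreover have "card H = card H1 + codeg H S"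
        unfolding H1_def using psubset.hyps by (rule card_eq_card_edges_avoiding_plus_codeg)
      ultimately have "(\<Sum>S\<in>shadow r H1. d S) < card H1"
        using low psubset.prems(2) by linarith
      moreover have "\<forall>e\<in>H1. finite e" using psubset.prems(1) H1_def by auto
      ultimately obtain H' where "H' \<subseteq> H1" "H' \<noteq> {}" "\<forall>S\<in>shadow r H'. d S < codeg H' S"
        using psubset.IH[OF \<open>H1 \<subset> H\<close>] by blast
      then show ?thesis using \<open>H1 \<subset> H\<close> by blast
    qed
  qed
qed

definition miss_weight :: "nat \<Rightarrow> (nat \<Rightarrow> 'a set) \<Rightarrow> (nat \<Rightarrow> nat) \<Rightarrow> (nat \<Rightarrow> nat) \<Rightarrow> 'a set \<Rightarrow> nat"
  where "miss_weight r P t \<sigma> S = (\<Sum>i<r. if S \<inter> P (\<sigma> i) = {} then t i - 1 else 0)"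

lemma min_partite_codeg_ge_if_codeg_gt_miss_weight:
  assumes "bij_betw \<sigma> {..<r} {..<r}"
    and "\<forall>S\<in>shadow r H. miss_weight r P t \<sigma> S < codeg H S"
  shows "min_partite_codeg_ge r P H t"
  unfolding min_partite_codeg_ge_def
proof (intro exI conjI allI impI ballI)
  fix i S assume "i < r" "S \<in> shadow r H" "S \<inter> P (\<sigma> i) = {}"
  then have "t i - 1 \<le> miss_weight r P t \<sigma> S"
    unfolding miss_weight_def
    using member_le_sum[of i "{..<r}" "\<lambda>i. if S \<inter> P (\<sigma> i) = {} then t i - 1 else 0"] by simp
  with assms(2) \<open>S \<in> shadow r H\<close> show "t i \<le> codeg H S" by fastforce
qed (rule assms(1))

lemma sum_rotation_indicator_le:
  fixes c i r :: nat
  assumes "card {j. j < r \<and> Q j} \<le> 1"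
  shows "(\<Sum>k<r. if Q ((i + k) mod r) then c else 0) \<le> c"
proof -
  have "(\<Sum>k<r. if Q ((i + k) mod r) then c else 0) = (\<Sum>j<r. if Q j then c else 0)"
    using sum.reindex_bij_betw[OF bij_betw_add_mod[of i r], of "\<lambda>j. if Q j then c else 0"]
    by (simp add: add.commute)
  also have "\<dots> = card {j. j < r \<and> Q j} * c"
    by (simp add: sum.If_cases lessThan_def Collect_conj_eq Int_commute)
  also have "\<dots> \<le> c" using assms by simp
  finally show ?thesis .
qed

lemma sum_rotations_miss_weight_le:
  assumes "r_partition r P H" "S \<in> shadow r H"
  shows "(\<Sum>k<r. miss_weight r P t (\<lambda>i. (i + k) mod r) S) \<le> (\<Sum>i<r. t i - 1)"
proof -
  have "(\<Sum>k<r. miss_weight r P t (\<lambda>i. (i + k) mod r) S)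
      = (\<Sum>i<r. \<Sum>k<r. if S \<inter> P ((i + k) mod r) = {} then t i - 1 else 0)"
    unfolding miss_weight_def by (rule sum.swap)
  also have "\<dots> \<le> (\<Sum>i<r. t i - 1)"
    using r_partition_shadow_misses_at_most_one_class[OF assms]
    by (intro sum_mono sum_rotation_indicator_le) auto
  finally show ?thesis .
qed

lemma ex_rotation_sum_miss_weight_less:
  assumes "r_partition r P H" "finite (shadow r H)"
    and "card (shadow r H) * (\<Sum>i<r. t i - 1) < r * card H"
  shows "\<exists>k<r. (\<Sum>S\<in>shadow r H. miss_weight r P t (\<lambda>i. (i + k) mod r) S) < card H"
proof (rule ccontr)
  assume "\<not> ?thesis"
  then have "\<forall>k\<in>{..<r}. card H \<le> (\<Sum>S\<in>shadow r H. miss_weight r P t (\<lambda>i. (i + k) mod r) S)"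
    by (meson lessThan_iff not_less)
  then have "(\<Sum>k<r. card H) \<le> (\<Sum>k<r. \<Sum>S\<in>shadow r H. miss_weight r P t (\<lambda>i. (i + k) mod r) S)"
    by (intro sum_mono) blast
  then have "r * card H \<le> (\<Sum>k<r. \<Sum>S\<in>shadow r H. miss_weight r P t (\<lambda>i. (i + k) mod r) S)"
    by simp
  also have "\<dots> = (\<Sum>S\<in>shadow r H. \<Sum>k<r. miss_weight r P t (\<lambda>i. (i + k) mod r) S)"
    by (rule sum.swap)
  also have "\<dots> \<le> (\<Sum>S\<in>shadow r H. \<Sum>i<r. t i - 1)"
    by (rule sum_mono) (rule sum_rotations_miss_weight_le[OF assms(1)])
  also have "\<dots> = card (shadow r H) * (\<Sum>i<r. t i - 1)"
    by simp
  finally show False using assms(3) by simp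
qed

theorem lemma2p1:
  fixes r tt :: nat and t :: "nat \<Rightarrow> nat"
    and P :: "nat \<Rightarrow> 'a set" and H :: "'a set set"
  assumes "r > 0" and "tt > 0" and "\<forall>i<r. t i > 0"
    and "(\<Sum>i<r. t i) = tt + r - 1"
    and "finite H" and "r_partition r P H"
    and "real (card H) > (real tt - 1) / real r * real (card (shadow r H))"
  shows "\<exists>H'. H' \<subseteq> H \<and> H' \<noteq> {} \<and> min_partite_codeg_ge r P H' t"
proof -
  have finite_edges: "\<forall>e\<in>H. finite e" using r_partition_edge(1)[OF assms(6)] by blast
  have "(\<Sum>i<r. t i - 1) = (\<Sum>i<r. t i) - (\<Sum>i<r. 1)"
    using assms(3) by (intro sum_subtractf_nat) auto
  then have weight_sum: "(\<Sum>i<r. t i - 1) = tt - 1"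
    using assms(4) by simp
  have "real (card (shadow r H) * (tt - 1)) = real r * ((real tt - 1) / real r * real (card (shadow r H)))"
    using assms(1,2) by (simp add: of_nat_diff)
  also have "\<dots> < real r * real (card H)"
    using assms(1,7) by (intro mult_strict_left_mono) auto
  also have "\<dots> = real (r * card H)"
    by simp
  finally have "card (shadow r H) * (\<Sum>i<r. t i - 1) < r * card H"
    unfolding weight_sum of_nat_less_iff .
  then obtain k where "(\<Sum>S\<in>shadow r H. miss_weight r P t (\<lambda>i. (i + k) mod r) S) < card H"
    using ex_rotation_sum_miss_weight_less[OF assms(6) finite_shadow[OF assms(5) finite_edges]]
    by blast
  then obtain H' where "H' \<subseteq> H" "H' \<noteq> {}"
    and "\<forall>S\<in>shadow r H'. miss_weight r P t (\<lambda>i. (i + k) mod r) S < codeg H' S"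
    using ex_subgraph_codeg_gt[OF finite_edges, of "miss_weight r P t (\<lambda>i. (i + k) mod r)"]
    by blast
  moreover from this(3) have "min_partite_codeg_ge r P H' t"
    by (rule min_partite_codeg_ge_if_codeg_gt_miss_weight[OF bij_betw_add_mod])
  ultimately show ?thesis by blast
qed

end
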